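(* Assume $\operatorname{char}\widetilde K\neq2,3$. Let $A,B,C,D\in\mathbb{Z}[\alpha_1,\dots,\alpha_6]$ be the polynomials defined below (with $u=1$). Let $\omega=(\omega_1,\dots,\omega_6)\in\mathbb{R}^6$ satisfy $\omega_1<\omega_2<\omega_3<\omega_4<\omega_5<\omega_6$ (a weight vector in the relative interior of a Type (I) cell). Then $$\operatorname{in}_\omega(A)=6\alpha_4^2\alpha_5^2\alpha_6^2,\quad \operatorname{in}_\omega(B)=4\alpha_3^2\alpha_4^2\alpha_5^4\alpha_6^4,\quad \operatorname{in}_\omega(C)=8\alpha_3^2\alpha_4^4\alpha_5^6\alpha_6^6,\quad \operatorname{in}_\omega(D)=\alpha_2^2\alpha_3^4\alpha_4^6\alpha_5^8\alpha_6^{10}.$$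
   Context: Here $\widetilde K$ is the residue field of the underlying non-Archimedean field. Set $\Delta_{ij}=(\alpha_i-\alpha_j)^2$. $A=\sum\Delta_{ij}\Delta_{kl}\Delta_{mn}$ over the 15 partitions $\{\{i,j\},\{k,l\},\{m,n\}\}$ of $\{1,\dots,6\}$ into pairs; $B=\sum(\Delta_{ij}\Delta_{jk}\Delta_{ki})(\Delta_{lm}\Delta_{mn}\Delta_{nl})$ over the 10 partitions $\{\{i,j,k\},\{l,m,n\}\}$ into two triples; $C=\sum(\Delta_{ij}\Delta_{jk}\Delta_{ki})(\Delta_{lm}\Delta_{mn}\Delta_{nl})(\Delta_{il}\Delta_{jm}\Delta_{kn})$ over the 60 choices of a partition into two triples $\{i,j,k\},\{l,m,n\}$ together with a bijective pairing $\{\{i,l\},\{j,m\},\{k,n\}\}$ between them; $D=\prod_{i<j}\Delta_{ij}$. For a polynomial $P$ and $\omega\in\mathbb{R}^6$, $\operatorname{in}_\omega(P)$ is the sum of the terms $c\,\alpha^m$ of $P$ for which $\langle\omega,m\rangle$ is maximal. *)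

theory Defs
  imports "HOL-Library.Poly_Mapping" Complex_Main
begin

text \<open>Multivariate polynomials in the variables alpha_1, ..., alpha_6 with coefficients
in a type 'a: finitely supported maps from monomials (exponent vectors, finitely
supported maps nat to nat) to coefficients.\<close>

type_synonym 'a mpoly = "(nat \<Rightarrow>\<^sub>0 nat) \<Rightarrow>\<^sub>0 'a"

definition Var :: "nat \<Rightarrow> 'a::comm_ring_1 mpoly" where
  "Var i = Poly_Mapping.single (Poly_Mapping.single i 1) 1"

definition Delta :: "nat set \<Rightarrow> 'a::comm_ring_1 mpoly" where
  "Delta b = (Var (Min b) - Var (Max b))^2"

definition Idx :: "nat set" where "Idx = {1..6}"

definition block_partitions :: "nat \<Rightarrow> nat set set set" where
  "block_partitions k = {P. \<Union>P = Idx \<and> (\<forall>b\<in>P. card b = k)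
                          \<and> (\<forall>b\<in>P. \<forall>c\<in>P. b \<noteq> c \<longrightarrow> b \<inter> c = {})}"

definition pair_partitions :: "nat set set set" where
  "pair_partitions = block_partitions 2"

definition triple_partitions :: "nat set set set" where
  "triple_partitions = block_partitions 3"

definition triDelta :: "nat set \<Rightarrow> 'a::comm_ring_1 mpoly" where
  "triDelta T = (\<Prod>b\<in>{b. b \<subseteq> T \<and> card b = 2}. Delta b)"

text \<open>Bijective pairings between the two triples of a triple partition P:
  pair partitions of {1..6} each of whose pairs meets every triple of P in one element.\<close>
definition pairings :: "nat set set \<Rightarrow> nat set set set" where
  "pairings P = {M \<in> pair_partitions. \<forall>m\<in>M. \<forall>T\<in>P. card (m \<inter> T) = 1}"

definition polyA :: "'a::comm_ring_1 mpoly" where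
  "polyA = (\<Sum>P\<in>pair_partitions. \<Prod>b\<in>P. Delta b)"

definition polyB :: "'a::comm_ring_1 mpoly" where
  "polyB = (\<Sum>P\<in>triple_partitions. \<Prod>T\<in>P. triDelta T)"

definition polyC :: "'a::comm_ring_1 mpoly" where
  "polyC = (\<Sum>P\<in>triple_partitions. \<Sum>M\<in>pairings P.
              (\<Prod>T\<in>P. triDelta T) * (\<Prod>b\<in>M. Delta b))"

definition polyD :: "'a::comm_ring_1 mpoly" where
  "polyD = (\<Prod>b\<in>{b. b \<subseteq> Idx \<and> card b = 2}. Delta b)"

definition wt :: "(nat \<Rightarrow> real) \<Rightarrow> (nat \<Rightarrow>\<^sub>0 nat) \<Rightarrow> real" where
  "wt \<omega> m = (\<Sum>i\<in>Poly_Mapping.keys m. \<omega> i * real (Poly_Mapping.lookup m i))"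

definition initial_form :: "(nat \<Rightarrow> real) \<Rightarrow> 'a::comm_ring_1 mpoly \<Rightarrow> 'a mpoly" where
  "initial_form \<omega> P = Abs_poly_mapping (\<lambda>m.
      if m \<in> Poly_Mapping.keys P \<and> wt \<omega> m = Max (wt \<omega> ` Poly_Mapping.keys P) then Poly_Mapping.lookup P m else 0)"

end

theory Submission
  imports Defs
begin

text \<open>For \<omega> 1 < \<dots> < \<omega> 6 the leading term of Delta {i, j} = (\<alpha> i - \<alpha> j)^2 with i < j
  is \<alpha> j^2, all other terms having strictly smaller weight, and the leading term of a product is
  the product of the leading terms.  Unfolding the partitions of {1, \<dots>, 6} recursively writes
  A, B, C and D as explicit sums of products of Delta's.  In each sum the summands attaining the
  largest leading weight all have the same leading monomial, and there are 6, 4, 8 and 1 of them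
  respectively; every other summand lies strictly below it for every increasing \<omega>.  The
  hypotheses on the characteristic only ensure that these coefficients do not vanish.\<close>

lemma wt_eq_sum_superset:
  assumes "finite S" "Poly_Mapping.keys m \<subseteq> S"
  shows "wt \<omega> m = (\<Sum>i\<in>S. \<omega> i * real (Poly_Mapping.lookup m i))"
  unfolding wt_def
  by (rule sum.mono_neutral_left) (use assms in \<open>auto simp: in_keys_iff\<close>)

lemma wt_add: "wt \<omega> (a + b) = wt \<omega> a + wt \<omega> b"
proof -
  let ?S = "Poly_Mapping.keys a \<union> Poly_Mapping.keys b"
  have fin: "finite ?S" by simp
  have "wt \<omega> (a + b) = (\<Sum>i\<in>?S. \<omega> i * real (Poly_Mapping.lookup (a + b) i))"
    by (rule wt_eq_sum_superset[OF fin]) (rule keys_add)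
  also have "\<dots> = (\<Sum>i\<in>?S. \<omega> i * real (Poly_Mapping.lookup a i))
                 + (\<Sum>i\<in>?S. \<omega> i * real (Poly_Mapping.lookup b i))"
    by (simp add: lookup_add algebra_simps sum.distrib)
  also have "\<dots> = wt \<omega> a + wt \<omega> b"
    by (simp add: wt_eq_sum_superset[OF fin, symmetric])
  finally show ?thesis .
qed

lemma wt_single: "wt \<omega> (Poly_Mapping.single i n) = \<omega> i * real n"
  unfolding wt_def by auto

lemma wt_zero [simp]: "wt \<omega> 0 = 0"
  unfolding wt_def by simp

definition wt_below :: "(nat \<Rightarrow> real) \<Rightarrow> 'a::comm_ring_1 mpoly \<Rightarrow> real \<Rightarrow> bool" where
  "wt_below \<omega> p w \<longleftrightarrow> (\<forall>m\<in>Poly_Mapping.keys p. wt \<omega> m < w)"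

definition wt_atmost :: "(nat \<Rightarrow> real) \<Rightarrow> 'a::comm_ring_1 mpoly \<Rightarrow> real \<Rightarrow> bool" where
  "wt_atmost \<omega> p w \<longleftrightarrow> (\<forall>m\<in>Poly_Mapping.keys p. wt \<omega> m \<le> w)"

lemma wt_below_imp_atmost: "wt_below \<omega> p w \<Longrightarrow> wt_atmost \<omega> p w"
  unfolding wt_below_def wt_atmost_def by (simp add: less_imp_le)

lemma wt_below_zero [simp]: "wt_below \<omega> 0 w"
  unfolding wt_below_def by simp

lemma wt_below_add: "wt_below \<omega> p w \<Longrightarrow> wt_below \<omega> q w \<Longrightarrow> wt_below \<omega> (p + q) w"
  unfolding wt_below_def using keys_add[of p q] by (meson UnE subsetD)

lemma wt_below_mono: "wt_below \<omega> p w \<Longrightarrow> w \<le> w' \<Longrightarrow> wt_below \<omega> p w'"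
  unfolding wt_below_def by fastforce

lemma wt_below_single: "wt \<omega> m < w \<Longrightarrow> wt_below \<omega> (Poly_Mapping.single m c) w"
  unfolding wt_below_def by simp

lemma wt_atmost_single: "wt_atmost \<omega> (Poly_Mapping.single m c) (wt \<omega> m)"
  unfolding wt_atmost_def by simp

lemma wt_below_mult_left:
  assumes "wt_below \<omega> p w1" "wt_atmost \<omega> q w2"
  shows "wt_below \<omega> (p * q) (w1 + w2)"
  unfolding wt_below_def
proof
  fix k assume "k \<in> Poly_Mapping.keys (p * q)"
  then obtain x y where xy: "k = x + y" "x \<in> Poly_Mapping.keys p" "y \<in> Poly_Mapping.keys q"
    using keys_mult[of p q] by blast
  have "wt \<omega> x < w1" using assms(1) xy(2) unfolding wt_below_def by blast
  moreover have "wt \<omega> y \<le> w2" using assms(2) xy(3) unfolding wt_atmost_def by blast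
  ultimately show "wt \<omega> k < w1 + w2" by (simp add: xy(1) wt_add)
qed

lemma wt_below_mult_right:
  "wt_atmost \<omega> p w1 \<Longrightarrow> wt_below \<omega> q w2 \<Longrightarrow> wt_below \<omega> (p * q) (w1 + w2)"
  using wt_below_mult_left[of \<omega> q w2 p w1] by (simp add: mult.commute add.commute)

text \<open>The coefficient c may be 0: then the statement says that all terms of p lie strictly below
  the weight of m.\<close>

definition lead_term :: "(nat \<Rightarrow> real) \<Rightarrow> 'a::comm_ring_1 mpoly \<Rightarrow> (nat \<Rightarrow>\<^sub>0 nat) \<Rightarrow> 'a \<Rightarrow> bool" where
  "lead_term \<omega> p m c \<longleftrightarrow> (\<exists>r. p = Poly_Mapping.single m c + r \<and> wt_below \<omega> r (wt \<omega> m))"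

lemma lead_termE:
  assumes "lead_term \<omega> p m c"
  obtains r where "p = Poly_Mapping.single m c + r" "wt_below \<omega> r (wt \<omega> m)"
  using assms unfolding lead_term_def by blast

lemma lead_term_zero: "lead_term \<omega> 0 m 0"
  unfolding lead_term_def by simp

lemma lead_term_mult:
  assumes "lead_term \<omega> p m c" "lead_term \<omega> q n d"
  shows "lead_term \<omega> (p * q) (m + n) (c * d)"
proof -
  obtain p' where p: "p = Poly_Mapping.single m c + p'" "wt_below \<omega> p' (wt \<omega> m)"
    using assms(1) by (rule lead_termE)
  obtain q' where q: "q = Poly_Mapping.single n d + q'" "wt_below \<omega> q' (wt \<omega> n)"
    using assms(2) by (rule lead_termE)
  let ?r = "Poly_Mapping.single m c * q' + p' * Poly_Mapping.single n d + p' * q'"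
  have "p * q = Poly_Mapping.single (m + n) (c * d) + ?r"
    by (simp add: p q algebra_simps mult_single)
  moreover have "wt_below \<omega> ?r (wt \<omega> (m + n))"
    unfolding wt_add
    by (intro wt_below_add wt_below_mult_left wt_below_mult_right wt_atmost_single
        p q wt_below_imp_atmost)
  ultimately show ?thesis unfolding lead_term_def by blast
qed

lemma lead_term_add:
  assumes "lead_term \<omega> p m c" "m \<noteq> t \<longrightarrow> wt \<omega> m < wt \<omega> t" "lead_term \<omega> q t d"
  shows "lead_term \<omega> (p + q) t ((if m = t then c else 0) + d)"
proof -
  obtain p' where p: "p = Poly_Mapping.single m c + p'" "wt_below \<omega> p' (wt \<omega> m)"
    using assms(1) by (rule lead_termE)
  obtain q' where q: "q = Poly_Mapping.single t d + q'" "wt_below \<omega> q' (wt \<omega> t)"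
    using assms(3) by (rule lead_termE)
  show ?thesis
  proof (cases "m = t")
    case True
    have "p + q = Poly_Mapping.single t (c + d) + (p' + q')"
      by (simp add: p q True single_add algebra_simps)
    moreover have "wt_below \<omega> (p' + q') (wt \<omega> t)"
      using p q True by (intro wt_below_add) auto
    ultimately show ?thesis using True unfolding lead_term_def by auto
  next
    case False
    then have lt: "wt \<omega> m < wt \<omega> t" using assms(2) by auto
    have "p + q = Poly_Mapping.single t d + (Poly_Mapping.single m c + p' + q')"
      by (simp add: p q algebra_simps)
    moreover have "wt_below \<omega> (Poly_Mapping.single m c + p' + q') (wt \<omega> t)"
      using p q lt by (intro wt_below_add wt_below_single) (auto intro: wt_below_mono)
    ultimately show ?thesis using False unfolding lead_term_def by auto
  qed
qed

lemma lead_term_lower: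
  assumes "lead_term \<omega> p m c" "m \<noteq> t \<longrightarrow> wt \<omega> m < wt \<omega> t"
  shows "lead_term \<omega> p t (if m = t then c else 0)"
  using lead_term_add[OF assms lead_term_zero] by simp

lemma initial_form_lead_term:
  assumes "lead_term \<omega> p m c" "c \<noteq> 0"
  shows "initial_form \<omega> p = Poly_Mapping.single m c"
proof -
  obtain r where p: "p = Poly_Mapping.single m c + r" "wt_below \<omega> r (wt \<omega> m)"
    using assms(1) by (rule lead_termE)
  have "m \<notin> Poly_Mapping.keys r" using p(2) unfolding wt_below_def by auto
  then have lookup_p: "Poly_Mapping.lookup p k = (if k = m then c else Poly_Mapping.lookup r k)" for k
    by (simp add: p lookup_add lookup_single in_keys_iff)
  have m_key: "m \<in> Poly_Mapping.keys p" using assms(2) lookup_p by (simp add: in_keys_iff)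
  have other: "k \<in> Poly_Mapping.keys p \<Longrightarrow> k \<noteq> m \<Longrightarrow> wt \<omega> k < wt \<omega> m" for k
    using p(2) lookup_p unfolding wt_below_def by (auto simp: in_keys_iff)
  have max: "Max (wt \<omega> ` Poly_Mapping.keys p) = wt \<omega> m"
    by (rule Max_eqI) (use m_key other in \<open>force+\<close>)
  have "(\<lambda>k. if k \<in> Poly_Mapping.keys p \<and> wt \<omega> k = Max (wt \<omega> ` Poly_Mapping.keys p)
              then Poly_Mapping.lookup p k else 0)
      = Poly_Mapping.lookup (Poly_Mapping.single m c)"
    unfolding max by (intro ext) (use m_key in \<open>auto simp: lookup_single lookup_p dest: other\<close>)
  then show ?thesis unfolding initial_form_def by simp
qed

text \<open>Monomials in \<alpha> 0, \<alpha> 1, \<dots> are written as exponent lists, so that weights and equality of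
  monomials can be decided by evaluation.\<close>

fun monom_of_list :: "nat \<Rightarrow> nat list \<Rightarrow> (nat \<Rightarrow>\<^sub>0 nat)" where
  "monom_of_list n [] = 0"
| "monom_of_list n (x # xs) = Poly_Mapping.single n x + monom_of_list (n + 1) xs"

fun wt_list :: "(nat \<Rightarrow> real) \<Rightarrow> nat \<Rightarrow> nat list \<Rightarrow> real" where
  "wt_list \<omega> n [] = 0"
| "wt_list \<omega> n (x # xs) = \<omega> n * real x + wt_list \<omega> (n + 1) xs"

lemma wt_monom_of_list: "wt \<omega> (monom_of_list n v) = wt_list \<omega> n v"
  by (induction v arbitrary: n) (simp_all add: wt_add wt_single)

lemma monom_of_list_add:
  "length v = length w \<Longrightarrow> monom_of_list n (map2 (+) v w) = monom_of_list n v + monom_of_list n w"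
proof (induction v arbitrary: n w)
  case Nil then show ?case by simp
next
  case (Cons a v)
  then obtain b w' where "w = b # w'" by (cases w) auto
  with Cons show ?case by (simp add: single_add algebra_simps)
qed

lemma lookup_monom_of_list:
  "Poly_Mapping.lookup (monom_of_list n v) i = (if n \<le> i \<and> i < n + length v then v ! (i - n) else 0)"
proof (induction v arbitrary: n)
  case Nil then show ?case by simp
next
  case (Cons a v)
  then show ?case
    by (cases "i = n") (auto simp: lookup_add lookup_single when_def nth_Cons' Suc_diff_Suc)
qed

lemma wt_list_7:
  "wt_list \<omega> 0 [a0, a1, a2, a3, a4, a5, a6] = \<omega> 0 * real a0 + \<omega> 1 * real a1 + \<omega> 2 * real a2
     + \<omega> 3 * real a3 + \<omega> 4 * real a4 + \<omega> 5 * real a5 + \<omega> 6 * real a6"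
  by (simp add: numeral_eq_Suc)

lemma monom_of_list_7:
  "monom_of_list 0 [a0, a1, a2, a3, a4, a5, a6] = Poly_Mapping.single 0 a0 + Poly_Mapping.single 1 a1
     + Poly_Mapping.single 2 a2 + Poly_Mapping.single 3 a3 + Poly_Mapping.single 4 a4
     + Poly_Mapping.single 5 a5 + Poly_Mapping.single 6 a6"
  by (simp add: numeral_eq_Suc add.assoc)

definition lead_list :: "(nat \<Rightarrow> real) \<Rightarrow> 'a::comm_ring_1 mpoly \<Rightarrow> nat list \<Rightarrow> 'a \<Rightarrow> bool" where
  "lead_list \<omega> p v c \<longleftrightarrow> lead_term \<omega> p (monom_of_list 0 v) c"

lemma lead_list_mult:
  "lead_list \<omega> p v c \<Longrightarrow> lead_list \<omega> q w d \<Longrightarrow> length v = length w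
    \<Longrightarrow> lead_list \<omega> (p * q) (map2 (+) v w) (c * d)"
  unfolding lead_list_def by (simp add: monom_of_list_add lead_term_mult)

lemma monom_of_list_inj_if_wt_less:
  "v \<noteq> t \<longrightarrow> wt_list \<omega> 0 v < wt_list \<omega> 0 t
    \<Longrightarrow> (monom_of_list 0 v = monom_of_list 0 t) = (v = t)"
  by (metis less_irrefl wt_monom_of_list)

lemma lead_list_add:
  assumes "lead_list \<omega> p v c" "v \<noteq> t \<longrightarrow> wt_list \<omega> 0 v < wt_list \<omega> 0 t" "lead_list \<omega> q t d"
  shows "lead_list \<omega> (p + q) t ((if v = t then c else 0) + d)"
  using lead_term_add[of \<omega> p "monom_of_list 0 v" c "monom_of_list 0 t" q d] assms
  unfolding lead_list_def monom_of_list_inj_if_wt_less[OF assms(2)]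
  by (auto simp: wt_monom_of_list)

lemma lead_list_lower:
  assumes "lead_list \<omega> p v c" "v \<noteq> t \<longrightarrow> wt_list \<omega> 0 v < wt_list \<omega> 0 t"
  shows "lead_list \<omega> p t (if v = t then c else 0)"
  using lead_term_lower[of \<omega> p "monom_of_list 0 v" c "monom_of_list 0 t"] assms
  unfolding lead_list_def monom_of_list_inj_if_wt_less[OF assms(2)]
  by (auto simp: wt_monom_of_list)

lemma lead_list_coeff_cong: "lead_list \<omega> p t c \<Longrightarrow> c = c' \<Longrightarrow> lead_list \<omega> p t c'"
  by simp

lemma Var_mult:
  "Var i * Var j = Poly_Mapping.single (Poly_Mapping.single i 1 + Poly_Mapping.single j 1) 1"
  unfolding Var_def by (simp add: mult_single)

lemma Var_power: "(Var i :: 'a::comm_ring_1 mpoly) ^ n = Poly_Mapping.single (Poly_Mapping.single i n) 1"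
proof (induction n)
  case 0 then show ?case by simp
next
  case (Suc n)
  have "Poly_Mapping.single i 1 + Poly_Mapping.single i n = Poly_Mapping.single i (Suc n)"
    by (simp add: single_add[symmetric])
  then show ?case using Suc.IH unfolding Var_def by (simp add: mult_single)
qed

lemma numeral_mult_single:
  "(numeral k :: 'a::comm_ring_1 mpoly) * Poly_Mapping.single m 1 = Poly_Mapping.single m (numeral k)"
  by (simp add: single_numeral[symmetric] mult_single del: single_numeral)

lemma lead_term_Delta:
  fixes \<omega> :: "nat \<Rightarrow> real"
  assumes "i < j" "\<omega> i < \<omega> j"
  shows "lead_term \<omega> (Delta {i, j} :: 'a::comm_ring_1 mpoly) (Poly_Mapping.single j 2) 1"
proof -
  have minmax: "Min {i, j} = i" "Max {i, j} = j" using assms by auto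
  have expand: "(Var i - Var j)^2 = Var j * Var j + (Var i * Var i - 2 * (Var i * Var j) :: 'a mpoly)"
    by (simp add: power2_eq_square algebra_simps)
  have double: "Poly_Mapping.single k (1::nat) + Poly_Mapping.single k 1 = Poly_Mapping.single k 2" for k
    by (metis one_add_one single_add)
  have D: "(Delta {i, j} :: 'a mpoly) = Poly_Mapping.single (Poly_Mapping.single j 2) 1
     + (Poly_Mapping.single (Poly_Mapping.single i 2) 1
        + - Poly_Mapping.single (Poly_Mapping.single i 1 + Poly_Mapping.single j 1) 2)"
    unfolding Delta_def minmax expand Var_mult double numeral_mult_single by simp
  have "wt_below \<omega> (Poly_Mapping.single (Poly_Mapping.single i 2) (1::'a)) (wt \<omega> (Poly_Mapping.single j 2))"
    using assms by (intro wt_below_single) (simp add: wt_single)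
  moreover have "wt_below \<omega> (- Poly_Mapping.single (Poly_Mapping.single i 1 + Poly_Mapping.single j 1) (2::'a))
      (wt \<omega> (Poly_Mapping.single j 2))"
    using assms unfolding wt_below_def by (simp add: wt_single wt_add)
  ultimately show ?thesis unfolding lead_term_def using D wt_below_add by blast
qed

text \<open>The exponent list of \<alpha> j^2 among \<alpha> 0, \<dots>, \<alpha> 6, spelled out so that it evaluates for numeral j.\<close>

definition sq_exps :: "nat \<Rightarrow> nat list" where
  "sq_exps j = [if j = 0 then 2 else 0, if j = 1 then 2 else 0, if j = 2 then 2 else 0,
     if j = 3 then 2 else 0, if j = 4 then 2 else 0, if j = 5 then 2 else 0, if j = 6 then 2 else 0]"

lemma monom_of_sq_exps: "j < 7 \<Longrightarrow> monom_of_list 0 (sq_exps j) = Poly_Mapping.single j 2"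
proof -
  assume "j < 7"
  then have "j = 0 \<or> j = 1 \<or> j = 2 \<or> j = 3 \<or> j = 4 \<or> j = 5 \<or> j = 6" by linarith
  then have "sq_exps j = (replicate 7 0)[j := 2]"
    unfolding sq_exps_def by (elim disjE) (simp_all add: numeral_eq_Suc)
  with \<open>j < 7\<close> show ?thesis
    by (intro poly_mapping_eqI) (auto simp: lookup_monom_of_list lookup_single when_def nth_list_update)
qed

lemma lead_list_Delta: "i < j \<Longrightarrow> j < 7 \<Longrightarrow> \<omega> i < \<omega> j \<Longrightarrow> lead_list \<omega> (Delta {i, j}) (sq_exps j) 1"
  unfolding lead_list_def by (simp add: monom_of_sq_exps lead_term_Delta)

lemma initial_form_lead_list:
  "lead_list \<omega> p t c \<Longrightarrow> c \<noteq> 0 \<Longrightarrow> initial_form \<omega> p = Poly_Mapping.single (monom_of_list 0 t) c"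
  unfolding lead_list_def by (rule initial_form_lead_term)

definition partitions_into :: "nat \<Rightarrow> nat set \<Rightarrow> nat set set set" where
  "partitions_into k X = {P. \<Union>P = X \<and> (\<forall>b\<in>P. card b = k) \<and> (\<forall>b\<in>P. \<forall>c\<in>P. b \<noteq> c \<longrightarrow> b \<inter> c = {})}"

definition subsets_of_card :: "nat \<Rightarrow> nat set \<Rightarrow> nat set set" where
  "subsets_of_card k X = {c. c \<subseteq> X \<and> card c = k}"

lemma finite_partitions_into: "finite X \<Longrightarrow> finite (partitions_into k X)"
proof -
  assume "finite X"
  moreover have "partitions_into k X \<subseteq> Pow (Pow X)" unfolding partitions_into_def by auto
  ultimately show ?thesis by (meson finite_Pow_iff finite_subset)
qed

lemma finite_subsets_of_card: "finite X \<Longrightarrow> finite (subsets_of_card k X)"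
  unfolding subsets_of_card_def by simp

lemma finite_partition_into: "P \<in> partitions_into k X \<Longrightarrow> finite X \<Longrightarrow> finite P"
  unfolding partitions_into_def using finite_UnionD by blast

lemma partitions_into_empty: "partitions_into (Suc k) {} = {{}}"
proof -
  have "P = {}" if "P \<in> partitions_into (Suc k) {}" for P
  proof -
    have "\<forall>b\<in>P. b = {}" "\<forall>b\<in>P. card b = Suc k" using that unfolding partitions_into_def by auto
    then show ?thesis by (metis card.empty ex_in_conv nat.distinct(1))
  qed
  moreover have "{} \<in> partitions_into (Suc k) {}" unfolding partitions_into_def by auto
  ultimately show ?thesis by blast
qed

lemma partition_into_remove_block:
  assumes P: "P \<in> partitions_into (Suc k) (insert x X)" and b: "b \<in> P" "x \<in> b" and x: "x \<notin> X"
  shows "P - {b} \<in> partitions_into (Suc k) (X - (b - {x}))"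
proof -
  have U: "\<Union>P = insert x X" and card: "\<forall>d\<in>P. card d = Suc k"
    and dis: "\<forall>d\<in>P. \<forall>e\<in>P. d \<noteq> e \<longrightarrow> d \<inter> e = {}"
    using P unfolding partitions_into_def by auto
  have "\<Union>(P - {b}) = X - (b - {x})"
  proof
    show "\<Union>(P - {b}) \<subseteq> X - (b - {x})"
    proof
      fix y assume "y \<in> \<Union>(P - {b})"
      then obtain d where d: "d \<in> P" "d \<noteq> b" "y \<in> d" by auto
      then have "y \<notin> b" using dis b(1) by blast
      moreover have "y \<in> insert x X" using U d by blast
      ultimately show "y \<in> X - (b - {x})" using b(2) by blast
    qed
    show "X - (b - {x}) \<subseteq> \<Union>(P - {b})"
    proof
      fix y assume y: "y \<in> X - (b - {x})"
      then have "y \<notin> b" using x by blast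
      moreover obtain d where "d \<in> P" "y \<in> d" using U y by blast
      ultimately show "y \<in> \<Union>(P - {b})" by blast
    qed
  qed
  moreover have "\<forall>d\<in>P - {b}. card d = Suc k" using card by simp
  moreover have "\<forall>d\<in>P - {b}. \<forall>e\<in>P - {b}. d \<noteq> e \<longrightarrow> d \<inter> e = {}" using dis by simp
  ultimately show ?thesis unfolding partitions_into_def by simp
qed

lemma partition_into_insert_block:
  assumes c: "c \<in> subsets_of_card k X" and P': "P' \<in> partitions_into (Suc k) (X - c)"
    and x: "x \<notin> X" and fin: "finite X"
  shows "insert (insert x c) P' \<in> partitions_into (Suc k) (insert x X)"
proof -
  have cX: "c \<subseteq> X" "card c = k" using c unfolding subsets_of_card_def by auto
  have "finite c" using cX fin finite_subset by blast
  moreover have "x \<notin> c" using cX x by auto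
  moreover have "\<Union>P' = X - c" "\<forall>b\<in>P'. card b = Suc k"
    "\<forall>b\<in>P'. \<forall>d\<in>P'. b \<noteq> d \<longrightarrow> b \<inter> d = {}" using P' unfolding partitions_into_def by auto
  moreover have "insert x c \<inter> d = {}" if "d \<in> P'" for d
    using that \<open>\<Union>P' = X - c\<close> x by auto
  ultimately show ?thesis using cX unfolding partitions_into_def by (auto simp: Int_commute)
qed

lemma partitions_into_insert:
  assumes x: "x \<notin> X" and fin: "finite X"
  shows "partitions_into (Suc k) (insert x X)
       = (\<Union>c\<in>subsets_of_card k X. insert (insert x c) ` partitions_into (Suc k) (X - c))"
proof
  show "partitions_into (Suc k) (insert x X)
     \<subseteq> (\<Union>c\<in>subsets_of_card k X. insert (insert x c) ` partitions_into (Suc k) (X - c))"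
  proof
    fix P assume P: "P \<in> partitions_into (Suc k) (insert x X)"
    then have "x \<in> \<Union>P" unfolding partitions_into_def by auto
    then obtain b where b: "b \<in> P" "x \<in> b" by blast
    have "card b = Suc k" "b \<subseteq> insert x X" using P b(1) unfolding partitions_into_def by auto
    then have "b - {x} \<in> subsets_of_card k X"
      using b(2) unfolding subsets_of_card_def by (auto simp: card.infinite)
    moreover have "P = insert (insert x (b - {x})) (P - {b})" using b by (simp add: insert_absorb)
    ultimately show "P \<in> (\<Union>c\<in>subsets_of_card k X. insert (insert x c) ` partitions_into (Suc k) (X - c))"
      using partition_into_remove_block[OF P b x] by blast
  qed
  show "(\<Union>c\<in>subsets_of_card k X. insert (insert x c) ` partitions_into (Suc k) (X - c))
      \<subseteq> partitions_into (Suc k) (insert x X)"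
    using partition_into_insert_block[OF _ _ x fin] by blast
qed

lemma sum_partitions_into_insert:
  fixes g :: "nat set set \<Rightarrow> 'b::comm_monoid_add"
  assumes x: "x \<notin> X" and fin: "finite X"
  shows "(\<Sum>P\<in>partitions_into (Suc k) (insert x X). g P) =
    (\<Sum>c\<in>subsets_of_card k X. \<Sum>P'\<in>partitions_into (Suc k) (X - c). g (insert (insert x c) P'))"
proof -
  have block_notin: "insert x c \<notin> P'" if "P' \<in> partitions_into (Suc k) (X - c)" for c P'
    using that x unfolding partitions_into_def by auto
  have x_notin: "x \<notin> c" if "c \<in> subsets_of_card k X" for c
    using that x unfolding subsets_of_card_def by auto
  have "(\<Sum>P\<in>partitions_into (Suc k) (insert x X). g P) =
    (\<Sum>c\<in>subsets_of_card k X. \<Sum>P\<in>insert (insert x c) ` partitions_into (Suc k) (X - c). g P)"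
    unfolding partitions_into_insert[OF x fin]
  proof (rule sum.UNION_disjoint)
    show "finite (subsets_of_card k X)" using fin by (rule finite_subsets_of_card)
    show "\<forall>c\<in>subsets_of_card k X. finite (insert (insert x c) ` partitions_into (Suc k) (X - c))"
      using fin by (simp add: finite_partitions_into)
    show "\<forall>c1\<in>subsets_of_card k X. \<forall>c2\<in>subsets_of_card k X. c1 \<noteq> c2 \<longrightarrow>
      insert (insert x c1) ` partitions_into (Suc k) (X - c1)
        \<inter> insert (insert x c2) ` partitions_into (Suc k) (X - c2) = {}"
    proof (intro ballI impI)
      fix c1 c2 assume c: "c1 \<in> subsets_of_card k X" "c2 \<in> subsets_of_card k X" "c1 \<noteq> c2"
      have "P1 \<noteq> P2" if "P1 \<in> insert (insert x c1) ` partitions_into (Suc k) (X - c1)"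
        "P2 \<in> insert (insert x c2) ` partitions_into (Suc k) (X - c2)" for P1 P2
      proof
        assume "P1 = P2"
        with that obtain Q where "Q \<in> partitions_into (Suc k) (X - c2)" "insert x c1 \<in> insert (insert x c2) Q"
          by blast
        then have "insert x c1 = insert x c2"
          using x unfolding partitions_into_def by auto
        then show False using c x_notin by (metis Diff_insert_absorb)
      qed
      then show "insert (insert x c1) ` partitions_into (Suc k) (X - c1)
        \<inter> insert (insert x c2) ` partitions_into (Suc k) (X - c2) = {}" by blast
    qed
  qed
  also have "\<dots> = (\<Sum>c\<in>subsets_of_card k X. \<Sum>P'\<in>partitions_into (Suc k) (X - c). g (insert (insert x c) P'))"
  proof (rule sum.cong[OF refl])
    fix c
    have "inj_on (insert (insert x c)) (partitions_into (Suc k) (X - c))"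
      using block_notin by (intro inj_onI) (metis insert_ident)
    then show "sum g (insert (insert x c) ` partitions_into (Suc k) (X - c))
      = (\<Sum>P'\<in>partitions_into (Suc k) (X - c). g (insert (insert x c) P'))"
      by (simp add: sum.reindex)
  qed
  finally show ?thesis .
qed

lemma sum_prod_partitions_into_insert_weighted:
  fixes h :: "nat set \<Rightarrow> 'b::comm_semiring_1" and G :: "nat set set \<Rightarrow> 'b"
  assumes x: "x \<notin> X" and fin: "finite X"
  shows "(\<Sum>P\<in>partitions_into (Suc k) (insert x X). (\<Prod>b\<in>P. h b) * G P) =
    (\<Sum>c\<in>subsets_of_card k X. h (insert x c) *
       (\<Sum>P'\<in>partitions_into (Suc k) (X - c). (\<Prod>b\<in>P'. h b) * G (insert (insert x c) P')))"
  unfolding sum_partitions_into_insert[OF x fin] sum_distrib_left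
proof (intro sum.cong refl)
  fix c P' assume P': "P' \<in> partitions_into (Suc k) (X - c)"
  have "insert x c \<notin> P'" using P' x unfolding partitions_into_def by auto
  moreover have "finite P'" using P' fin by (simp add: finite_partition_into)
  ultimately show "(\<Prod>b\<in>insert (insert x c) P'. h b) * G (insert (insert x c) P') =
       h (insert x c) * ((\<Prod>b\<in>P'. h b) * G (insert (insert x c) P'))"
    by (simp add: mult.assoc)
qed

lemma sum_prod_partitions_into_insert:
  fixes h :: "nat set \<Rightarrow> 'b::comm_semiring_1"
  assumes "x \<notin> X" "finite X"
  shows "(\<Sum>P\<in>partitions_into (Suc k) (insert x X). \<Prod>b\<in>P. h b) =
    (\<Sum>c\<in>subsets_of_card k X. h (insert x c) * (\<Sum>P'\<in>partitions_into (Suc k) (X - c). \<Prod>b\<in>P'. h b))"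
  using sum_prod_partitions_into_insert_weighted[OF assms, where G = "\<lambda>_. 1" and h = h and k = k]
  by simp

lemma sum_partitions_into_empty: "(\<Sum>P\<in>partitions_into (Suc k) {}. g P) = g {}"
  by (simp add: partitions_into_empty)

lemma subsets_of_card_0: "finite X \<Longrightarrow> subsets_of_card 0 X = {{}}"
  unfolding subsets_of_card_def by (auto simp: card_eq_0_iff dest: finite_subset)

lemma subsets_of_card_Suc_empty: "subsets_of_card (Suc k) {} = {}"
  unfolding subsets_of_card_def by auto

lemma subsets_of_card_Suc_insert:
  assumes y: "y \<notin> Y" and fin: "finite Y"
  shows "subsets_of_card (Suc k) (insert y Y) = insert y ` subsets_of_card k Y \<union> subsets_of_card (Suc k) Y"
proof
  show "subsets_of_card (Suc k) (insert y Y) \<subseteq> insert y ` subsets_of_card k Y \<union> subsets_of_card (Suc k) Y"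
  proof
    fix c assume "c \<in> subsets_of_card (Suc k) (insert y Y)"
    then have c: "c \<subseteq> insert y Y" "card c = Suc k" unfolding subsets_of_card_def by auto
    then have "finite c" using fin finite_subset by blast
    show "c \<in> insert y ` subsets_of_card k Y \<union> subsets_of_card (Suc k) Y"
    proof (cases "y \<in> c")
      case True
      then have "c = insert y (c - {y})" "c - {y} \<subseteq> Y" "card (c - {y}) = k"
        using c \<open>finite c\<close> by auto
      then show ?thesis unfolding subsets_of_card_def by blast
    next
      case False
      then show ?thesis using c unfolding subsets_of_card_def by auto
    qed
  qed
  have "insert y d \<in> subsets_of_card (Suc k) (insert y Y)" if "d \<in> subsets_of_card k Y" for d
  proof -
    have "d \<subseteq> Y" "card d = k" using that unfolding subsets_of_card_def by auto
    moreover have "finite d" using \<open>d \<subseteq> Y\<close> fin finite_subset by blast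
    moreover have "y \<notin> d" using \<open>d \<subseteq> Y\<close> y by blast
    ultimately show ?thesis unfolding subsets_of_card_def by auto
  qed
  moreover have "subsets_of_card (Suc k) Y \<subseteq> subsets_of_card (Suc k) (insert y Y)"
    unfolding subsets_of_card_def by auto
  ultimately show "insert y ` subsets_of_card k Y \<union> subsets_of_card (Suc k) Y
      \<subseteq> subsets_of_card (Suc k) (insert y Y)"
    by blast
qed

lemma insert_subsets_of_card_disjoint:
  "y \<notin> Y \<Longrightarrow> insert y ` subsets_of_card k Y \<inter> subsets_of_card (Suc k) Y = {}"
  unfolding subsets_of_card_def by auto

lemma inj_on_insert_subsets_of_card:
  assumes "y \<notin> Y"
  shows "inj_on (insert y) (subsets_of_card k Y)"
proof (rule inj_onI)
  fix a b assume ab: "a \<in> subsets_of_card k Y" "b \<in> subsets_of_card k Y" "insert y a = insert y b"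
  then have "y \<notin> a" "y \<notin> b" using assms unfolding subsets_of_card_def by auto
  then show "a = b" using ab(3) by (metis Diff_insert_absorb)
qed

lemma sum_subsets_of_card_Suc_insert:
  assumes "y \<notin> Y" "finite Y"
  shows "(\<Sum>c\<in>subsets_of_card (Suc k) (insert y Y). f c)
       = (\<Sum>c\<in>subsets_of_card k Y. f (insert y c)) + (\<Sum>c\<in>subsets_of_card (Suc k) Y. f c)"
  unfolding subsets_of_card_Suc_insert[OF assms]
  using assms insert_subsets_of_card_disjoint inj_on_insert_subsets_of_card
  by (simp add: sum.union_disjoint sum.reindex finite_subsets_of_card)

lemma prod_subsets_of_card_Suc_insert:
  assumes "y \<notin> Y" "finite Y"
  shows "(\<Prod>c\<in>subsets_of_card (Suc k) (insert y Y). f c)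
       = (\<Prod>c\<in>subsets_of_card k Y. f (insert y c)) * (\<Prod>c\<in>subsets_of_card (Suc k) Y. f c)"
  unfolding subsets_of_card_Suc_insert[OF assms]
  using assms insert_subsets_of_card_disjoint inj_on_insert_subsets_of_card
  by (simp add: prod.union_disjoint prod.reindex finite_subsets_of_card)

lemma sum_subsets_of_card_0: "finite X \<Longrightarrow> (\<Sum>c\<in>subsets_of_card 0 X. f c) = f {}"
  by (simp add: subsets_of_card_0)

lemma prod_subsets_of_card_0: "finite X \<Longrightarrow> (\<Prod>c\<in>subsets_of_card 0 X. f c) = f {}"
  by (simp add: subsets_of_card_0)

lemma sum_subsets_of_card_Suc_empty: "(\<Sum>c\<in>subsets_of_card (Suc k) {}. f c) = 0"
  by (simp add: subsets_of_card_Suc_empty)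

lemma prod_subsets_of_card_Suc_empty: "(\<Prod>c\<in>subsets_of_card (Suc k) {}. f c) = 1"
  by (simp add: subsets_of_card_Suc_empty)

lemma Idx_eq: "Idx = {1, 2, 3, 4, 5, 6}"
  unfolding Idx_def by auto

lemma block_partitions_eq: "block_partitions k = partitions_into k {1, 2, 3, 4, 5, 6}"
  unfolding block_partitions_def partitions_into_def Idx_eq ..

lemma triDelta_eq: "triDelta T = (\<Prod>b\<in>subsets_of_card (Suc (Suc 0)) T. Delta b)"
  unfolding triDelta_def subsets_of_card_def numeral_2_eq_2 ..

lemma polyA_eq: "polyA = (\<Sum>P\<in>partitions_into (Suc (Suc 0)) {1, 2, 3, 4, 5, 6}. \<Prod>b\<in>P. Delta b)"
  unfolding polyA_def pair_partitions_def block_partitions_eq numeral_2_eq_2 ..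

lemma polyB_eq:
  "polyB = (\<Sum>P\<in>partitions_into (Suc (Suc (Suc 0))) {1, 2, 3, 4, 5, 6}.
              \<Prod>T\<in>P. \<Prod>b\<in>subsets_of_card (Suc (Suc 0)) T. Delta b)"
  unfolding polyB_def triple_partitions_def block_partitions_eq numeral_3_eq_3 triDelta_eq ..

text \<open>Summing over all pair partitions, with the factor Delta b replaced by 0 for every pair b
  that is not a pairing edge, makes the sum over pairings amenable to the same expansion.\<close>

lemma sum_pairings_eq:
  "(\<Sum>M\<in>pairings P. \<Prod>b\<in>M. (Delta b :: 'a::comm_ring_1 mpoly)) =
   (\<Sum>M\<in>partitions_into (Suc (Suc 0)) {1, 2, 3, 4, 5, 6}.
      \<Prod>b\<in>M. if \<forall>T\<in>P. card (b \<inter> T) = Suc 0 then Delta b else 0)"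
proof -
  let ?M = "partitions_into (Suc (Suc 0)) {1, 2, 3, 4, 5, 6::nat}"
  have pairings_eq: "pairings P = {M \<in> ?M. \<forall>b\<in>M. \<forall>T\<in>P. card (b \<inter> T) = Suc 0}"
    unfolding pairings_def pair_partitions_def block_partitions_eq numeral_2_eq_2 by simp
  have fin: "finite ?M" by (simp add: finite_partitions_into)
  show ?thesis unfolding pairings_eq sum.inter_filter[OF fin]
  proof (rule sum.cong[OF refl])
    fix M assume "M \<in> ?M"
    then have "finite M" by (simp add: finite_partition_into)
    then show "(if \<forall>b\<in>M. \<forall>T\<in>P. card (b \<inter> T) = Suc 0 then \<Prod>b\<in>M. Delta b else 0) =
      (\<Prod>b\<in>M. if \<forall>T\<in>P. card (b \<inter> T) = Suc 0 then Delta b else (0 :: 'a mpoly))"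
      by (auto intro: prod.cong intro!: prod_zero) blast
  qed
qed

lemma polyC_eq:
  "(polyC :: 'a::comm_ring_1 mpoly) =
   (\<Sum>P\<in>partitions_into (Suc (Suc (Suc 0))) {1, 2, 3, 4, 5, 6}.
      (\<Prod>T\<in>P. \<Prod>b\<in>subsets_of_card (Suc (Suc 0)) T. Delta b) *
      (\<Sum>M\<in>partitions_into (Suc (Suc 0)) {1, 2, 3, 4, 5, 6}.
         \<Prod>b\<in>M. if \<forall>T\<in>P. card (b \<inter> T) = Suc 0 then Delta b else 0))"
  unfolding polyC_def sum_distrib_left[symmetric] sum_pairings_eq
  unfolding triple_partitions_def block_partitions_eq numeral_3_eq_3 triDelta_eq ..

lemma polyD_eq: "polyD = (\<Prod>b\<in>subsets_of_card (Suc (Suc 0)) {1, 2, 3, 4, 5, 6}. Delta b)"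
  unfolding polyD_def subsets_of_card_def Idx_eq numeral_2_eq_2 ..

lemmas expand_partitions_simps =
  sum_prod_partitions_into_insert sum_partitions_into_empty
  sum_subsets_of_card_Suc_insert sum_subsets_of_card_0 sum_subsets_of_card_Suc_empty
  prod_subsets_of_card_Suc_insert prod_subsets_of_card_0 prod_subsets_of_card_Suc_empty insert_Diff_if

lemmas lead_list_rules = lead_list_mult lead_list_Delta lead_list_add lead_list_lower

text \<open>In the following proofs simp first expands each polynomial into an explicit sum of products
  of Delta's; the leading terms are then accumulated from left to right, and the remaining side
  conditions are comparisons of weights, which are linear in \<omega>.  Since the conclusion of
  lead_list_lower matches every goal, it has to come last in lead_list_rules.\<close>

lemma lead_list_polyA:
  fixes \<omega> :: "nat \<Rightarrow> real"
  assumes ord: "\<omega> 1 < \<omega> 2" "\<omega> 2 < \<omega> 3" "\<omega> 3 < \<omega> 4" "\<omega> 4 < \<omega> 5" "\<omega> 5 < \<omega> 6"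
  shows "lead_list \<omega> (polyA :: 'a::comm_ring_1 mpoly) [0, 0, 0, 0, 2, 2, 2] 6"
  unfolding polyA_eq
  apply (simp add: expand_partitions_simps distrib_left distrib_right add.assoc del: One_nat_def)
  apply (rule lead_list_coeff_cong)
  apply ((rule lead_list_rules | simp del: wt_list.simps One_nat_def add: wt_list_7 sq_exps_def
      | use ord in linarith)+)
  done

lemma lead_list_polyB:
  fixes \<omega> :: "nat \<Rightarrow> real"
  assumes ord: "\<omega> 1 < \<omega> 2" "\<omega> 2 < \<omega> 3" "\<omega> 3 < \<omega> 4" "\<omega> 4 < \<omega> 5" "\<omega> 5 < \<omega> 6"
  shows "lead_list \<omega> (polyB :: 'a::comm_ring_1 mpoly) [0, 0, 0, 2, 2, 4, 4] 4"
  unfolding polyB_eq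
  apply (simp add: expand_partitions_simps distrib_left distrib_right add.assoc del: One_nat_def)
  apply (rule lead_list_coeff_cong)
  apply ((rule lead_list_rules | simp del: wt_list.simps One_nat_def add: wt_list_7 sq_exps_def
      | use ord in linarith)+)
  done

lemma lead_list_polyC:
  fixes \<omega> :: "nat \<Rightarrow> real"
  assumes ord: "\<omega> 1 < \<omega> 2" "\<omega> 2 < \<omega> 3" "\<omega> 3 < \<omega> 4" "\<omega> 4 < \<omega> 5" "\<omega> 5 < \<omega> 6"
  shows "lead_list \<omega> (polyC :: 'a::comm_ring_1 mpoly) [0, 0, 0, 2, 4, 6, 6] 8"
  unfolding polyC_eq
  apply (simp add: expand_partitions_simps sum_prod_partitions_into_insert_weighted Int_insert_left
      del: One_nat_def)
  apply (simp add: expand_partitions_simps distrib_left distrib_right add.assoc Int_insert_left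
      del: One_nat_def)
  apply (rule lead_list_coeff_cong)
  apply ((rule lead_list_rules | simp del: wt_list.simps One_nat_def add: wt_list_7 sq_exps_def
      | use ord in linarith)+)
  done

lemma lead_list_polyD:
  fixes \<omega> :: "nat \<Rightarrow> real"
  assumes ord: "\<omega> 1 < \<omega> 2" "\<omega> 2 < \<omega> 3" "\<omega> 3 < \<omega> 4" "\<omega> 4 < \<omega> 5" "\<omega> 5 < \<omega> 6"
  shows "lead_list \<omega> (polyD :: 'a::comm_ring_1 mpoly) [0, 0, 2, 4, 6, 8, 10] 1"
  unfolding polyD_eq
  apply (simp add: expand_partitions_simps del: One_nat_def)
  apply (rule lead_list_coeff_cong)
  apply ((rule lead_list_rules | simp del: wt_list.simps One_nat_def add: wt_list_7 sq_exps_def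
      | use ord in linarith)+)
  done

lemma single_monom_of_list_eq_Var_power:
  "Poly_Mapping.single (monom_of_list 0 [a0, a1, a2, a3, a4, a5, a6]) (c :: 'a::comm_ring_1) =
   Poly_Mapping.single 0 c * Var 0 ^ a0 * Var 1 ^ a1 * Var 2 ^ a2 * Var 3 ^ a3 * Var 4 ^ a4 * Var 5 ^ a5 * Var 6 ^ a6"
  by (simp del: monom_of_list.simps add: monom_of_list_7 Var_power mult_single add.assoc)

theorem lemma7p5:
  fixes \<omega> :: "nat \<Rightarrow> real"
  assumes char2: "(2::'a::field) \<noteq> 0" and char3: "(3::'a) \<noteq> 0"
    and ord: "\<omega> 1 < \<omega> 2" "\<omega> 2 < \<omega> 3" "\<omega> 3 < \<omega> 4" "\<omega> 4 < \<omega> 5" "\<omega> 5 < \<omega> 6"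
  shows "(initial_form \<omega> (polyA :: 'a mpoly) = 6 * Var 4 ^ 2 * Var 5 ^ 2 * Var 6 ^ 2)
    \<and> (initial_form \<omega> (polyB :: 'a mpoly) = 4 * Var 3 ^ 2 * Var 4 ^ 2 * Var 5 ^ 4 * Var 6 ^ 4)
    \<and> (initial_form \<omega> (polyC :: 'a mpoly) = 8 * Var 3 ^ 2 * Var 4 ^ 4 * Var 5 ^ 6 * Var 6 ^ 6)
    \<and> (initial_form \<omega> (polyD :: 'a mpoly) =
           Var 2 ^ 2 * Var 3 ^ 4 * Var 4 ^ 6 * Var 5 ^ 8 * Var 6 ^ 10)"
proof -
  have "(6::'a) \<noteq> 0" "(4::'a) \<noteq> 0" "(8::'a) \<noteq> 0"
    using char2 char3 mult_eq_0_iff[of "2::'a" 3] mult_eq_0_iff[of "2::'a" 2]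
      mult_eq_0_iff[of "4::'a" 2] by simp_all
  note initial_forms =
    initial_form_lead_list[OF lead_list_polyA[OF ord] \<open>(6::'a) \<noteq> 0\<close>]
    initial_form_lead_list[OF lead_list_polyB[OF ord] \<open>(4::'a) \<noteq> 0\<close>]
    initial_form_lead_list[OF lead_list_polyC[OF ord] \<open>(8::'a) \<noteq> 0\<close>]
    initial_form_lead_list[OF lead_list_polyD[OF ord] one_neq_zero]
  show ?thesis
    unfolding initial_forms single_monom_of_list_eq_Var_power
    by (simp add: single_numeral[symmetric] del: single_numeral)
qed

end
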